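(* Let $\mu\in\mathbb{C}$ with $\mu\notin\frac12\mathbb{Z}$ or $\mu\in\mathbb{Z}$, and let $(\widetilde{L_{1,\mu}}^1,\cdot,[\cdot,\cdot])$ be a transposed Poisson algebra structure on the Lie algebra $\widetilde{L_{1,\mu}}^1$. Then there exist complex numbers $\alpha_t,\beta_t$ ($t\in\mathbb{Z}$) such that the commutative associative multiplication is given by $L_m\cdot L_n=\sum_{t\in\mathbb{Z}}\alpha_tM_{m+n+t}+\sum_{t\in\mathbb{Z}}\beta_tY_{m+n+t+\frac12}$, $L_m\cdot Y_{n+\frac12}=\sum_{t\in\mathbb{Z}}\beta_tM_{m+n+t+1}$ for all $m,n\in\mathbb{Z}$, with all remaining products of basis elements (up to commutativity) equal to zero.
   Context: For $\mu\in\mathbb{C}$, $\widetilde{L_{1,\mu}}^1$ is the complex Lie algebra with basis $\{L_n,M_n,Y_{n+\frac12},C_L\mid n\in\mathbb{Z}\}$, $C_L$ central, and nonzero brackets $[L_m,L_n]=(n-m)L_{m+n}+\frac{m^3-m}{12}\delta_{m+n,0}C_L$, $[L_m,M_n]=(n-m+2\mu)M_{m+n}$, $[L_m,Y_{n+\frac12}]=(n+\frac12-m+\mu)Y_{m+n+\frac12}$, $[Y_{m+\frac12},Y_{n+\frac12}]=(n-m)M_{m+n+1}$. A transposed Poisson algebra structure on a Lie algebra $(L,[\cdot,\cdot])$ is a commutative associative multiplication $\cdot$ on $L$ such that $2z\cdot[x,y]=[z\cdot x,y]+[x,z\cdot y]$ for all $x,y,z\in L$. The sums are understood as elements of the algebra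 (finitely many nonzero terms). *)

theory Defs
  imports Complex_Main
begin

text \<open>Basis of the Lie algebra: LB m = L_m, MB m = M_m, YB n = Y_{n+1/2}, CB = C_L.
  Elements of the algebra are finitely supported coefficient functions.\<close>

datatype basis = LB int | MB int | YB int | CB

type_synonym vec = "basis \<Rightarrow> complex"

definition supp :: "vec \<Rightarrow> basis set" where
  "supp x = {b. x b \<noteq> 0}"

definition Alg :: "vec set" where
  "Alg = {x. finite (supp x)}"

definition e :: "basis \<Rightarrow> vec" where
  "e b = (\<lambda>c. if c = b then 1 else 0)"

fun brb :: "complex \<Rightarrow> basis \<Rightarrow> basis \<Rightarrow> vec" where
  "brb \<mu> (LB m) (LB n) =
     (\<lambda>c. of_int (n - m) * e (LB (m + n)) c
        + (if m + n = 0 then (of_int m ^ 3 - of_int m) / 12 else 0) * e CB c)"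
| "brb \<mu> (LB m) (MB n) = (\<lambda>c. (of_int (n - m) + 2 * \<mu>) * e (MB (m + n)) c)"
| "brb \<mu> (MB n) (LB m) = (\<lambda>c. - (of_int (n - m) + 2 * \<mu>) * e (MB (m + n)) c)"
| "brb \<mu> (LB m) (YB n) = (\<lambda>c. (of_int n + 1/2 - of_int m + \<mu>) * e (YB (m + n)) c)"
| "brb \<mu> (YB n) (LB m) = (\<lambda>c. - (of_int n + 1/2 - of_int m + \<mu>) * e (YB (m + n)) c)"
| "brb \<mu> (YB m) (YB n) = (\<lambda>c. of_int (n - m) * e (MB (m + n + 1)) c)"
| "brb \<mu> _ _ = (\<lambda>c. 0)"

definition lie :: "complex \<Rightarrow> vec \<Rightarrow> vec \<Rightarrow> vec" where
  "lie \<mu> x y = (\<lambda>c. \<Sum>a\<in>supp x. \<Sum>b\<in>supp y. x a * y b * brb \<mu> a b c)"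

definition transposed_poisson :: "complex \<Rightarrow> (vec \<Rightarrow> vec \<Rightarrow> vec) \<Rightarrow> bool" where
  "transposed_poisson \<mu> mul \<longleftrightarrow>
     (\<forall>x\<in>Alg. \<forall>y\<in>Alg. mul x y \<in> Alg) \<and>
     (\<forall>x\<in>Alg. \<forall>y\<in>Alg. \<forall>z\<in>Alg. mul (\<lambda>b. x b + y b) z = (\<lambda>b. mul x z b + mul y z b)) \<and>
     (\<forall>x\<in>Alg. \<forall>y\<in>Alg. \<forall>z\<in>Alg. mul x (\<lambda>b. y b + z b) = (\<lambda>b. mul x y b + mul x z b)) \<and>
     (\<forall>c::complex. \<forall>x\<in>Alg. \<forall>y\<in>Alg. mul (\<lambda>b. c * x b) y = (\<lambda>b. c * mul x y b)) \<and>
     (\<forall>c::complex. \<forall>x\<in>Alg. \<forall>y\<in>Alg. mul x (\<lambda>b. c * y b) = (\<lambda>b. c * mul x y b)) \<and>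
     (\<forall>x\<in>Alg. \<forall>y\<in>Alg. mul x y = mul y x) \<and>
     (\<forall>x\<in>Alg. \<forall>y\<in>Alg. \<forall>z\<in>Alg. mul (mul x y) z = mul x (mul y z)) \<and>
     (\<forall>x\<in>Alg. \<forall>y\<in>Alg. \<forall>z\<in>Alg.
        (\<lambda>b. 2 * mul z (lie \<mu> x y) b) = (\<lambda>b. lie \<mu> (mul z x) y b + lie \<mu> x (mul z y) b))"

end

theory Submission
  imports Defs
begin

text \<open>Fix a basis vector \<open>e\<^sub>z\<close>. The transposed Poisson identity says that
  \<open>\<phi> = e\<^sub>z \<cdot> (-)\<close> is a \<open>\<onehalf>\<close>-derivation: \<open>2 \<phi>[x,y] = [\<phi> x, y] + [x, \<phi> y]\<close>.
  For \<open>x = C\<^sub>L\<close> the left side vanishes, so \<open>[e\<^sub>z \<cdot> C\<^sub>L, y] = 0\<close>; feeding this back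
  with commutativity gives \<open>C\<^sub>L \<cdot> [x,y] = 0\<close>, and since every basis vector is a combination of brackets,
  \<open>C\<^sub>L\<close> annihilates everything.
  Taking \<open>x = L\<^sub>m\<close> and reading off coordinates, the coordinates of \<open>\<phi>(L\<^sub>n)\<close> satisfy a
  recurrence forcing them to depend only on the index difference, and those of \<open>\<phi>(M\<^sub>n)\<close>,
  \<open>\<phi>(Y\<^sub>n)\<close> satisfy a recurrence forcing them to vanish, except the \<open>M\<close>-coordinates of
  \<open>\<phi>(Y\<^sub>n)\<close>, which are tied to the \<open>Y\<close>-coordinates of \<open>\<phi>(L\<^sub>0)\<close>. The central charge
  yields a cubic relation killing the \<open>L\<close>-coordinates of \<open>\<phi>(L\<^sub>n)\<close>. Commutativity then
  turns the dependence on \<open>z\<close> into a dependence on \<open>m + n\<close> only.\<close>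

text \<open>Coordinate form of \<open>2\<phi>[L\<^sub>m,L\<^sub>n] = [\<phi>L\<^sub>m,L\<^sub>n] + [L\<^sub>m,\<phi>L\<^sub>n]\<close>: \<open>X n k\<close> is the
  \<open>k\<close>-th \<open>L\<close>-, \<open>M\<close>- or \<open>Y\<close>-coordinate of \<open>\<phi>(L\<^sub>n)\<close>, and \<open>\<kappa>\<close> depends on which.\<close>
lemma recurrence_shift_invariant:
  fixes X :: "int \<Rightarrow> int \<Rightarrow> 'a::field_char_0" and \<kappa> :: 'a
  assumes rec: "\<And>m n k. 2 * of_int (n - m) * X (m + n) k
    = - (of_int k - 2 * of_int n + \<kappa>) * X m (k - n) + (of_int k - 2 * of_int m + \<kappa>) * X n (k - m)"
  shows "X n k = X 0 (k - n)"
proof -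
  have generic: "X p q = X 0 (q - p)" if "of_int (2*p - q) - \<kappa> \<noteq> 0" for p q
  proof -
    have "2 * of_int p * X p q = - (of_int q - 2 * of_int p + \<kappa>) * X 0 (q - p) + (of_int q + \<kappa>) * X p q"
      using rec[where m=0 and n=p and k=q] by simp
    then have "(of_int (2*p - q) - \<kappa>) * X p q = (of_int (2*p - q) - \<kappa>) * X 0 (q - p)"
      by (simp add: algebra_simps)
    with that show ?thesis by simp
  qed
  show ?thesis
  proof (cases "of_int (2*n - k) - \<kappa> = 0")
    case False
    then show ?thesis by (rule generic)
  next
    case True
    then have \<kappa>: "\<kappa> = of_int (2*n - k)" by simp
    obtain n' :: int where n': "n' \<notin> {0, n, 2*n}"
      using ex_new_if_finite[OF infinite_UNIV_int, of "{0, n, 2*n}"] by auto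
    have "X (n + n') (k + n') = X 0 (k - n)" and "X n' (k + n' - n) = X 0 (k - n)"
      using generic[of "n + n'" "k + n'"] generic[of n' "k + n' - n"] n' \<kappa> by simp_all
    moreover have "2 * of_int (n' - n) * X (n + n') (k + n')
      = - (of_int (k + n') - 2 * of_int n' + \<kappa>) * X n k + (of_int (k + n') - 2 * of_int n + \<kappa>) * X n' (k + n' - n)"
      using rec[where m=n and n=n' and k="k + n'"] by simp
    ultimately have "of_int (2*n - n') * X n k = of_int (2*n - n') * X 0 (k - n)"
      using \<kappa> by (simp add: algebra_simps)
    moreover have "(of_int (2*n - n') :: 'a) \<noteq> 0"
      using n' by (simp only: of_int_eq_0_iff) simp
    ultimately show ?thesis by simp
  qed
qed

text \<open>Coordinate form of \<open>2\<phi>[L\<^sub>m,x\<^sub>n] = [\<phi>L\<^sub>m,x\<^sub>n] + [L\<^sub>m,\<phi>x\<^sub>n]\<close> for \<open>x = M\<close> or \<open>Y\<close>,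
  once the term \<open>[\<phi>L\<^sub>m,x\<^sub>n]\<close> is known to vanish or has been subtracted off.\<close>

lemma recurrence_vanishes:
  fixes X :: "int \<Rightarrow> int \<Rightarrow> 'a::field_char_0" and \<rho> \<kappa> :: 'a
  assumes rec: "\<And>m n k. (2 * of_int (n - m) + \<rho>) * X (m + n) (m + k) = (of_int k - of_int m + \<kappa>) * X n k"
  shows "X n k = 0"
proof (rule ccontr)
  assume nonzero: "X n k \<noteq> 0"
  have weight: "2 * of_int p + \<rho> = of_int q + \<kappa>" if "X p q \<noteq> 0" for p q
    using rec[where m=0 and n=p and k=q] that by simp
  obtain m :: int where m: "m \<noteq> 0" "of_int k - of_int m + \<kappa> \<noteq> 0"
  proof (cases "of_int k - of_int 1 + \<kappa> = 0")
    case True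
    then have "of_int k - of_int 2 + \<kappa> \<noteq> 0" by (simp add: algebra_simps)
    then show ?thesis using that[of 2] by simp
  next
    case False
    then show ?thesis using that[of 1] by simp
  qed
  have "X (m + n) (m + k) \<noteq> 0"
    using rec[where m=m and n=n and k=k] m nonzero by auto
  from weight[OF this] weight[OF nonzero]
  have "(2 * of_int (m + n) + \<rho>) - (2 * of_int n + \<rho>) = (of_int (m + k) + \<kappa>) - (of_int k + \<kappa>)"
    by simp
  then have "2 * of_int m = (of_int m :: 'a)"
    by (simp add: algebra_simps)
  with m show False by simp
qed

lemma cubic_relation_vanishes:
  fixes H W :: "'a::field_char_0" and s :: int
  assumes rel: "\<And>m. 24 * of_int (s - 2*m) * W = H * of_int ((m - s) ^ 3 - (m - s) + m ^ 3 - m)"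
  shows "H = 0"
proof -
  define c where "c m = (m - s) ^ 3 - (m - s) + m ^ 3 - m" for m
  have elim: "H * of_int ((s - 2*b) * c a - (s - 2*a) * c b) = 0" for a b
  proof -
    have "H * of_int ((s - 2*b) * c a - (s - 2*a) * c b)
        = of_int (s - 2*b) * (H * of_int (c a)) - of_int (s - 2*a) * (H * of_int (c b))"
      by (simp add: algebra_simps)
    also have "\<dots> = 0"
      unfolding c_def rel[symmetric] by (simp add: algebra_simps)
    finally show ?thesis .
  qed
  obtain a b where "(s - 2*b) * c a - (s - 2*a) * c b \<noteq> 0"
  proof (cases "s \<ge> 0")
    case True
    have "(s - 2*(-2)) * c (-1) - (s - 2*(-1)) * c (-2) = (s+2)*(s+3)*(s+4)"
      by (simp add: c_def power3_eq_cube algebra_simps)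
    also have "\<dots> \<noteq> 0" using True by simp
    finally show ?thesis by (rule that)
  next
    case False
    have "(s - 2*2) * c 1 - (s - 2*1) * c 2 = - (s-2)*(s-3)*(s-4)"
      by (simp add: c_def power3_eq_cube algebra_simps)
    also have "\<dots> \<noteq> 0" using False by simp
    finally show ?thesis by (rule that)
  qed
  with elim[of b a] show ?thesis by (metis mult_eq_0_iff of_int_eq_0_iff)
qed

lemma e_in_Alg: "e b \<in> Alg"
  unfolding Alg_def supp_def e_def by auto

lemma supp_e: "supp (e b) = {b}"
  unfolding supp_def e_def by auto

lemma e_same [simp]: "e b b = 1"
  by (simp add: e_def)

lemma lie_e_e: "lie \<mu> (e a) (e b) = brb \<mu> a b"
  unfolding lie_def supp_e by simp

lemma lie_e_right_single:
  assumes "x \<in> Alg" and "\<And>a. brb \<mu> a b c \<noteq> 0 \<Longrightarrow> a = a\<^sub>0"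
  shows "lie \<mu> x (e b) c = x a\<^sub>0 * brb \<mu> a\<^sub>0 b c"
proof -
  have fin: "finite (supp x)" using assms(1) by (simp add: Alg_def)
  have "lie \<mu> x (e b) c = (\<Sum>a\<in>supp x. x a * brb \<mu> a b c)"
    unfolding lie_def supp_e by simp
  also have "\<dots> = (\<Sum>a\<in>insert a\<^sub>0 (supp x). x a * brb \<mu> a b c)"
    using fin by (intro sum.mono_neutral_left) (auto simp: supp_def)
  also have "\<dots> = x a\<^sub>0 * brb \<mu> a\<^sub>0 b c"
    using fin assms(2) by (subst sum.insert_remove) (auto intro!: sum.neutral)
  finally show ?thesis .
qed

lemma lie_x_L:
  assumes "x \<in> Alg"
  shows "lie \<mu> x (e (LB n)) c = (case c of
      LB k \<Rightarrow> of_int (2*n - k) * x (LB (k - n))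
    | MB k \<Rightarrow> - (of_int (k - 2*n) + 2*\<mu>) * x (MB (k - n))
    | YB k \<Rightarrow> - (of_int (k - 2*n) + 1/2 + \<mu>) * x (YB (k - n))
    | CB \<Rightarrow> x (LB (-n)) * (of_int (-n) ^ 3 - of_int (-n)) / 12)"
proof -
  define a\<^sub>0 where "a\<^sub>0 = (case c of LB k \<Rightarrow> LB (k - n) | MB k \<Rightarrow> MB (k - n)
    | YB k \<Rightarrow> YB (k - n) | CB \<Rightarrow> LB (-n))"
  have "lie \<mu> x (e (LB n)) c = x a\<^sub>0 * brb \<mu> a\<^sub>0 (LB n) c"
  proof (rule lie_e_right_single[OF assms])
    show "a = a\<^sub>0" if "brb \<mu> a (LB n) c \<noteq> 0" for a
      using that by (cases a; cases c) (auto simp: a\<^sub>0_def e_def split: if_splits)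
  qed
  then show ?thesis
    by (cases c) (auto simp: a\<^sub>0_def e_def algebra_simps)
qed

lemma lie_x_M:
  assumes "x \<in> Alg"
  shows "lie \<mu> x (e (MB n)) c = (case c of
      MB k \<Rightarrow> (of_int (2*n - k) + 2*\<mu>) * x (LB (k - n)) | _ \<Rightarrow> 0)"
proof -
  define a\<^sub>0 where "a\<^sub>0 = (case c of MB k \<Rightarrow> LB (k - n) | _ \<Rightarrow> CB)"
  have "lie \<mu> x (e (MB n)) c = x a\<^sub>0 * brb \<mu> a\<^sub>0 (MB n) c"
  proof (rule lie_e_right_single[OF assms])
    show "a = a\<^sub>0" if "brb \<mu> a (MB n) c \<noteq> 0" for a
      using that by (cases a; cases c) (auto simp: a\<^sub>0_def e_def split: if_splits)
  qed
  then show ?thesis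
    by (cases c) (auto simp: a\<^sub>0_def e_def algebra_simps)
qed

lemma lie_x_Y:
  assumes "x \<in> Alg"
  shows "lie \<mu> x (e (YB n)) c = (case c of
      MB k \<Rightarrow> of_int (2*n + 1 - k) * x (YB (k - n - 1))
    | YB k \<Rightarrow> (of_int (2*n - k) + 1/2 + \<mu>) * x (LB (k - n))
    | _ \<Rightarrow> 0)"
proof -
  define a\<^sub>0 where "a\<^sub>0 = (case c of MB k \<Rightarrow> YB (k - n - 1) | YB k \<Rightarrow> LB (k - n) | _ \<Rightarrow> CB)"
  have "lie \<mu> x (e (YB n)) c = x a\<^sub>0 * brb \<mu> a\<^sub>0 (YB n) c"
  proof (rule lie_e_right_single[OF assms])
    show "a = a\<^sub>0" if "brb \<mu> a (YB n) c \<noteq> 0" for a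
      using that by (cases a; cases c) (auto simp: a\<^sub>0_def e_def split: if_splits)
  qed
  then show ?thesis
    by (cases c) (auto simp: a\<^sub>0_def e_def algebra_simps)
qed

lemma brb_antisym: "brb \<mu> a b c = - brb \<mu> b a c"
proof -
  have cube_odd: "(of_int m ^ 3 - of_int m) / 12 + (of_int n ^ 3 - of_int n) / 12 = (0::complex)"
    if "m + n = 0" for m n :: int
  proof -
    from that have "n = - m" by simp
    then show ?thesis by (simp add: field_simps)
  qed
  show ?thesis
    by (cases a; cases b) (auto simp: e_def algebra_simps cube_odd)
qed

lemma lie_antisym: "lie \<mu> x y c = - lie \<mu> y x c"
proof -
  have "x a * y b * brb \<mu> a b c = - (y b * x a * brb \<mu> b a c)" for a b
    by (subst brb_antisym) simp
  then show ?thesis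
    unfolding lie_def by (subst sum.swap) (simp add: sum_negf)
qed

lemma lie_L_x:
  assumes "x \<in> Alg"
  shows "lie \<mu> (e (LB m)) x c = (case c of
      LB k \<Rightarrow> of_int (k - 2*m) * x (LB (k - m))
    | MB k \<Rightarrow> (of_int (k - 2*m) + 2*\<mu>) * x (MB (k - m))
    | YB k \<Rightarrow> (of_int (k - 2*m) + 1/2 + \<mu>) * x (YB (k - m))
    | CB \<Rightarrow> x (LB (-m)) * (of_int m ^ 3 - of_int m) / 12)"
  using lie_x_L[OF assms, of \<mu> m c] by (subst lie_antisym) (cases c; simp add: algebra_simps)

lemma scaled_e_in_Alg: "(\<lambda>c. a * e b c) \<in> Alg"
proof -
  have "supp (\<lambda>c. a * e b c) \<subseteq> {b}" unfolding supp_def e_def by auto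
  then show ?thesis unfolding Alg_def by (auto intro: finite_subset)
qed

locale tp_structure =
  fixes \<mu> :: complex and mul :: "vec \<Rightarrow> vec \<Rightarrow> vec"
  assumes transposed_poisson: "transposed_poisson \<mu> mul"
begin

lemma mul_closed: "x \<in> Alg \<Longrightarrow> y \<in> Alg \<Longrightarrow> mul x y \<in> Alg"
  using transposed_poisson unfolding transposed_poisson_def by meson

lemma mul_add_right:
  "x \<in> Alg \<Longrightarrow> y \<in> Alg \<Longrightarrow> z \<in> Alg \<Longrightarrow> mul x (\<lambda>b. y b + z b) = (\<lambda>b. mul x y b + mul x z b)"
  using transposed_poisson unfolding transposed_poisson_def by blast

lemma mul_scale_right: "x \<in> Alg \<Longrightarrow> y \<in> Alg \<Longrightarrow> mul x (\<lambda>b. c * y b) = (\<lambda>b. c * mul x y b)"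
  using transposed_poisson unfolding transposed_poisson_def by blast

lemma mul_commute: "x \<in> Alg \<Longrightarrow> y \<in> Alg \<Longrightarrow> mul x y = mul y x"
  using transposed_poisson unfolding transposed_poisson_def by blast

lemma tp_identity: "x \<in> Alg \<Longrightarrow> y \<in> Alg \<Longrightarrow> z \<in> Alg \<Longrightarrow>
    (\<lambda>b. 2 * mul z (lie \<mu> x y) b) = (\<lambda>b. lie \<mu> (mul z x) y b + lie \<mu> x (mul z y) b)"
  using transposed_poisson unfolding transposed_poisson_def by blast

abbreviation bp :: "basis \<Rightarrow> basis \<Rightarrow> vec" where
  "bp a b \<equiv> mul (e a) (e b)"

lemma bp_in_Alg: "bp a b \<in> Alg"
  by (simp add: mul_closed e_in_Alg)

lemma bp_commute: "bp a b = bp b a"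
  by (simp add: mul_commute e_in_Alg)

lemma mul_e_scaled: "mul (e z) (\<lambda>c. a * e b c) = (\<lambda>c. a * bp z b c)"
  by (simp add: mul_scale_right e_in_Alg)

lemma mul_e_lincomb:
  "mul (e z) (\<lambda>c. a * e b c + a' * e b' c) = (\<lambda>c. a * bp z b c + a' * bp z b' c)"
  using mul_add_right[OF e_in_Alg scaled_e_in_Alg scaled_e_in_Alg] by (simp add: mul_e_scaled)

lemma mul_e_zero: "mul (e z) (\<lambda>c. 0) = (\<lambda>c. 0)"
  using mul_e_scaled[of z 0 z] by simp

lemma tp_identity_e:
  "2 * mul (e z) (brb \<mu> a b) c = lie \<mu> (bp z a) (e b) c + lie \<mu> (e a) (bp z b) c"
  using fun_cong[OF tp_identity[of "e a" "e b" "e z", OF e_in_Alg e_in_Alg e_in_Alg], of c] by (simp add: lie_e_e)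

lemma mul_e_brb_L_L: "mul (e z) (brb \<mu> (LB m) (LB n)) = (\<lambda>c. of_int (n - m) * bp z (LB (m + n)) c
    + (if m + n = 0 then (of_int m ^ 3 - of_int m) / 12 else 0) * bp z CB c)"
  by (simp only: brb.simps mul_e_lincomb)

lemma mul_e_brb_L_M:
  "mul (e z) (brb \<mu> (LB m) (MB n)) = (\<lambda>c. (of_int (n - m) + 2 * \<mu>) * bp z (MB (m + n)) c)"
  by (simp only: brb.simps mul_e_scaled)

lemma mul_e_brb_L_Y:
  "mul (e z) (brb \<mu> (LB m) (YB n)) = (\<lambda>c. (of_int n + 1/2 - of_int m + \<mu>) * bp z (YB (m + n)) c)"
  by (simp only: brb.simps mul_e_scaled)

lemma lie_bp_C_e: "lie \<mu> (bp z CB) (e y) c = 0"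
proof -
  have "brb \<mu> CB y = (\<lambda>c. 0)" by (cases y) auto
  moreover have "lie \<mu> (e CB) x c = 0" for x
    unfolding lie_def supp_e by (intro sum.neutral) (auto elim: brb.elims)
  ultimately show ?thesis
    using tp_identity_e[of z CB y c] by (simp add: mul_e_zero)
qed

lemma mul_C_brb: "mul (e CB) (brb \<mu> x y) c = 0"
proof -
  have "lie \<mu> (bp CB x) (e y) c = 0"
    using lie_bp_C_e bp_commute by metis
  moreover have "lie \<mu> (e x) (bp CB y) c = 0"
    using lie_antisym[of \<mu> "e x" "bp CB y" c] lie_bp_C_e[of y x c] bp_commute by simp
  ultimately show ?thesis using tp_identity_e[of CB x y c] by simp
qed

text \<open>Each basis vector other than \<open>C\<^sub>L\<close> is a nonzero multiple of a bracket with
  \<open>L\<^sub>0\<close> or \<open>L\<^sub>1\<close>; and \<open>[L\<^sub>2, L\<^sub>-\<^sub>2] = -4 L\<^sub>0 + C\<^sub>L/2\<close>.\<close>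

lemma bp_C_L: "bp CB (LB n) c = 0"
proof (cases "n = 0")
  case True
  then show ?thesis using mul_C_brb[of "LB 1" "LB (-1)" c] by (simp only: mul_e_brb_L_L) simp
next
  case False
  then show ?thesis using mul_C_brb[of "LB 0" "LB n" c] by (simp only: mul_e_brb_L_L) simp
qed

lemma bp_C_M: "bp CB (MB n) c = 0"
proof (cases "of_int n + 2*\<mu> = 0")
  case True
  then show ?thesis
    using mul_C_brb[of "LB 1" "MB (n-1)" c] by (simp only: mul_e_brb_L_M) (simp add: algebra_simps)
next
  case False
  then show ?thesis using mul_C_brb[of "LB 0" "MB n" c] by (simp only: mul_e_brb_L_M) simp
qed

lemma bp_C_Y: "bp CB (YB n) c = 0"
proof (cases "of_int n + 1/2 + \<mu> = 0")
  case True
  have "of_int (n-1) + 1/2 - of_int 1 + \<mu> = (of_int n + 1/2 + \<mu>) - (2::complex)"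
    by (simp add: algebra_simps)
  with True have "of_int (n-1) + 1/2 - of_int 1 + \<mu> = (-2::complex)"
    by simp
  then show ?thesis using mul_C_brb[of "LB 1" "YB (n-1)" c] by (simp only: mul_e_brb_L_Y) simp
next
  case False
  then show ?thesis using mul_C_brb[of "LB 0" "YB n" c] by (simp only: mul_e_brb_L_Y) simp
qed

lemma bp_C_left: "bp CB b c = 0"
proof (cases b)
  case CB
  then show ?thesis
    using mul_C_brb[of "LB 2" "LB (-2)" c] bp_C_L[of 0 c] by (simp only: mul_e_brb_L_L) simp
qed (simp_all add: bp_C_L bp_C_M bp_C_Y)

lemma bp_C_right: "bp z CB c = 0"
  using bp_C_left bp_commute by metis

lemma tp_L_L: "2 * (of_int (n - m) * bp z (LB (m + n)) c)
    = lie \<mu> (bp z (LB m)) (e (LB n)) c + lie \<mu> (e (LB m)) (bp z (LB n)) c"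
  using tp_identity_e[of z "LB m" "LB n" c] by (simp only: mul_e_brb_L_L bp_C_right) simp

lemma tp_L_M: "2 * ((of_int (n - m) + 2*\<mu>) * bp z (MB (m + n)) c)
    = lie \<mu> (bp z (LB m)) (e (MB n)) c + lie \<mu> (e (LB m)) (bp z (MB n)) c"
  using tp_identity_e[of z "LB m" "MB n" c] by (simp only: mul_e_brb_L_M)

lemma tp_L_Y: "2 * ((of_int n + 1/2 - of_int m + \<mu>) * bp z (YB (m + n)) c)
    = lie \<mu> (bp z (LB m)) (e (YB n)) c + lie \<mu> (e (LB m)) (bp z (YB n)) c"
  using tp_identity_e[of z "LB m" "YB n" c] by (simp only: mul_e_brb_L_Y)

lemma bp_L_at_L_shift: "bp z (LB n) (LB k) = bp z (LB 0) (LB (k - n))"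
proof (rule recurrence_shift_invariant[where \<kappa>=0])
  fix m n k
  show "2 * of_int (n - m) * bp z (LB (m + n)) (LB k)
    = - (of_int k - 2 * of_int n + 0) * bp z (LB m) (LB (k - n))
      + (of_int k - 2 * of_int m + 0) * bp z (LB n) (LB (k - m))"
    using tp_L_L[of n m z "LB k"] by (simp add: lie_x_L lie_L_x bp_in_Alg algebra_simps)
qed

lemma bp_L_at_M_shift: "bp z (LB n) (MB k) = bp z (LB 0) (MB (k - n))"
proof (rule recurrence_shift_invariant[where \<kappa>="2*\<mu>"])
  fix m n k
  show "2 * of_int (n - m) * bp z (LB (m + n)) (MB k)
    = - (of_int k - 2 * of_int n + 2*\<mu>) * bp z (LB m) (MB (k - n))
      + (of_int k - 2 * of_int m + 2*\<mu>) * bp z (LB n) (MB (k - m))"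
    using tp_L_L[of n m z "MB k"] by (simp add: lie_x_L lie_L_x bp_in_Alg algebra_simps)
qed

lemma bp_L_at_Y_shift: "bp z (LB n) (YB k) = bp z (LB 0) (YB (k - n))"
proof (rule recurrence_shift_invariant[where \<kappa>="1/2 + \<mu>"])
  fix m n k
  show "2 * of_int (n - m) * bp z (LB (m + n)) (YB k)
    = - (of_int k - 2 * of_int n + (1/2 + \<mu>)) * bp z (LB m) (YB (k - n))
      + (of_int k - 2 * of_int m + (1/2 + \<mu>)) * bp z (LB n) (YB (k - m))"
    using tp_L_L[of n m z "YB k"] by (simp add: lie_x_L lie_L_x bp_in_Alg algebra_simps)
qed

lemma bp_L_at_C_relation: "24 * of_int (s - 2*m) * bp z (LB s) CB
    = bp z (LB 0) (LB (-s)) * of_int ((m - s) ^ 3 - (m - s) + m ^ 3 - m)"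
proof -
  have "bp z (LB m) (LB (m - s)) = bp z (LB 0) (LB (-s))"
    and "bp z (LB (s - m)) (LB (-m)) = bp z (LB 0) (LB (-s))"
    by (simp_all add: bp_L_at_L_shift[of z m] bp_L_at_L_shift[of z "s - m"])
  then have rel: "2 * (of_int (s - 2*m) * bp z (LB s) CB)
      = bp z (LB 0) (LB (-s)) * (of_int (m - s) ^ 3 - of_int (m - s)) / 12
        + bp z (LB 0) (LB (-s)) * (of_int m ^ 3 - of_int m) / 12"
    using tp_L_L[of "s - m" m z CB] by (simp add: lie_x_L lie_L_x bp_in_Alg)
  have "24 * of_int (s - 2*m) * bp z (LB s) CB = 12 * (2 * (of_int (s - 2*m) * bp z (LB s) CB))"
    by simp
  also have "\<dots> = bp z (LB 0) (LB (-s)) * (of_int (m - s) ^ 3 - of_int (m - s) + of_int m ^ 3 - of_int m)"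
    unfolding rel by (simp add: field_simps)
  finally show ?thesis by simp
qed

lemma bp_L_at_L: "bp z (LB n) (LB k) = 0"
proof -
  have "bp z (LB 0) (LB (- (n - k))) = 0"
    by (rule cubic_relation_vanishes[OF bp_L_at_C_relation])
  then show ?thesis using bp_L_at_L_shift[of z n k] by simp
qed

lemma bp_L_at_C: "bp z (LB s) CB = 0"
proof -
  have "24 * of_int (s - 2*m) * bp z (LB s) CB = 0" for m
    using bp_L_at_C_relation[of s m z] by (simp add: bp_L_at_L)
  from this[of "if s = 0 then 1 else 0"] show ?thesis by (simp split: if_splits)
qed

lemma bp_M_at_L: "bp z (MB n) (LB k) = 0"
proof (rule recurrence_vanishes[where \<rho>="4*\<mu>" and \<kappa>=0])
  fix m n k
  show "(2 * of_int (n - m) + 4*\<mu>) * bp z (MB (m + n)) (LB (m + k))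
    = (of_int k - of_int m + 0) * bp z (MB n) (LB k)"
    using tp_L_M[of n m z "LB (m + k)"] by (simp add: lie_x_M lie_L_x bp_in_Alg algebra_simps)
qed

lemma bp_M_at_M: "bp z (MB n) (MB k) = 0"
proof (rule recurrence_vanishes[where \<rho>="4*\<mu>" and \<kappa>="2*\<mu>"])
  fix m n k
  show "(2 * of_int (n - m) + 4*\<mu>) * bp z (MB (m + n)) (MB (m + k))
    = (of_int k - of_int m + 2*\<mu>) * bp z (MB n) (MB k)"
    using tp_L_M[of n m z "MB (m + k)"] by (simp add: lie_x_M lie_L_x bp_in_Alg bp_L_at_L algebra_simps)
qed

lemma bp_M_at_Y: "bp z (MB n) (YB k) = 0"
proof (rule recurrence_vanishes[where \<rho>="4*\<mu>" and \<kappa>="1/2 + \<mu>"])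
  fix m n k
  show "(2 * of_int (n - m) + 4*\<mu>) * bp z (MB (m + n)) (YB (m + k))
    = (of_int k - of_int m + (1/2 + \<mu>)) * bp z (MB n) (YB k)"
    using tp_L_M[of n m z "YB (m + k)"] by (simp add: lie_x_M lie_L_x bp_in_Alg algebra_simps)
qed

lemma bp_M_at_C: "bp z (MB s) CB = 0"
proof -
  have "(of_int (s - 2*m) + 2*\<mu>) * bp z (MB s) CB = 0" for m
    using tp_L_M[of "s - m" m z CB] by (simp add: lie_x_M lie_L_x bp_in_Alg bp_M_at_L)
  from this[of 0] this[of 1] show ?thesis
    by (cases "of_int s + 2*\<mu> = 0") (simp_all add: algebra_simps)
qed

lemma bp_Y_at_L: "bp z (YB n) (LB k) = 0"
proof (rule recurrence_vanishes[where \<rho>="1 + 2*\<mu>" and \<kappa>=0])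
  fix m n k
  show "(2 * of_int (n - m) + (1 + 2*\<mu>)) * bp z (YB (m + n)) (LB (m + k))
    = (of_int k - of_int m + 0) * bp z (YB n) (LB k)"
    using tp_L_Y[of n m z "LB (m + k)"] by (simp add: lie_x_Y lie_L_x bp_in_Alg algebra_simps)
qed

lemma bp_Y_at_Y: "bp z (YB n) (YB k) = 0"
proof (rule recurrence_vanishes[where \<rho>="1 + 2*\<mu>" and \<kappa>="1/2 + \<mu>"])
  fix m n k
  show "(2 * of_int (n - m) + (1 + 2*\<mu>)) * bp z (YB (m + n)) (YB (m + k))
    = (of_int k - of_int m + (1/2 + \<mu>)) * bp z (YB n) (YB k)"
    using tp_L_Y[of n m z "YB (m + k)"] by (simp add: lie_x_Y lie_L_x bp_in_Alg bp_L_at_L algebra_simps)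
qed

lemma bp_Y_at_C: "bp z (YB s) CB = 0"
proof -
  have "2 * ((of_int (s - 2*m) + 1/2 + \<mu>) * bp z (YB s) CB) = 0" for m
    using tp_L_Y[of "s - m" m z CB] by (simp add: lie_x_Y lie_L_x bp_in_Alg bp_Y_at_L algebra_simps)
  from this[of 0] this[of 1] show ?thesis
    by (cases "of_int s + 1/2 + \<mu> = 0") (simp_all add: algebra_simps)
qed

lemma bp_Y_at_M: "bp z (YB n) (MB k) = bp z (LB 0) (YB (k - n - 1))"
proof -
  define X where "X p q = bp z (YB p) (MB q) - bp z (LB 0) (YB (q - p - 1))" for p q
  have "X n k = 0"
  proof (rule recurrence_vanishes[where \<rho>="1 + 2*\<mu>" and \<kappa>="2*\<mu>"])
    fix m n k
    have "bp z (LB m) (YB (m + k - n - 1)) = bp z (LB 0) (YB (k - n - 1))"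
      using bp_L_at_Y_shift[of z m "m + k - n - 1"] by (simp add: algebra_simps)
    then show "(2 * of_int (n - m) + (1 + 2*\<mu>)) * X (m + n) (m + k) = (of_int k - of_int m + 2*\<mu>) * X n k"
      using tp_L_Y[of n m z "MB (m + k)"] by (simp add: X_def lie_x_Y lie_L_x bp_in_Alg algebra_simps)
  qed
  then show ?thesis by (simp add: X_def)
qed

lemma bp_L_L_at_M: "bp (LB m) (LB n) (MB k) = bp (LB 0) (LB 0) (MB (k - m - n))"
proof -
  have "bp (LB m) (LB n) (MB k) = bp (LB 0) (LB m) (MB (k - n))"
    using bp_L_at_M_shift[of "LB m" n k] by (simp add: bp_commute)
  also have "\<dots> = bp (LB 0) (LB 0) (MB (k - m - n))"
    using bp_L_at_M_shift[of "LB 0" m "k - n"] by (simp add: algebra_simps)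
  finally show ?thesis .
qed

lemma bp_L_L_at_Y: "bp (LB m) (LB n) (YB k) = bp (LB 0) (LB 0) (YB (k - m - n))"
proof -
  have "bp (LB m) (LB n) (YB k) = bp (LB 0) (LB m) (YB (k - n))"
    using bp_L_at_Y_shift[of "LB m" n k] by (simp add: bp_commute)
  also have "\<dots> = bp (LB 0) (LB 0) (YB (k - m - n))"
    using bp_L_at_Y_shift[of "LB 0" m "k - n"] by (simp add: algebra_simps)
  finally show ?thesis .
qed

lemma bp_L_Y_at_M: "bp (LB m) (YB n) (MB k) = bp (LB 0) (LB 0) (YB (k - m - n - 1))"
proof -
  have "bp (LB m) (YB n) (MB k) = bp (LB 0) (LB m) (YB (k - n - 1))"
    using bp_Y_at_M[of "LB m" n k] by (simp add: bp_commute)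
  also have "\<dots> = bp (LB 0) (LB 0) (YB (k - m - n - 1))"
    using bp_L_at_Y_shift[of "LB 0" m "k - n - 1"] by (simp add: algebra_simps)
  finally show ?thesis .
qed

lemma bp_M_right: "bp z (MB n) c = 0"
  by (cases c) (simp_all add: bp_M_at_L bp_M_at_M bp_M_at_Y bp_M_at_C)

lemma bp_M_left: "bp (MB n) z c = 0"
  using bp_M_right bp_commute by metis

lemma bp_Y_Y: "bp (YB m) (YB n) c = 0"
proof (cases c)
  case (MB k)
  have "bp (YB m) (YB n) (MB k) = bp (LB 0) (YB m) (YB (k - n - 1))"
    using bp_Y_at_M[of "YB m" n k] by (simp add: bp_commute)
  with MB show ?thesis by (simp add: bp_Y_at_Y)
qed (simp_all add: bp_Y_at_L bp_Y_at_Y bp_Y_at_C)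

end

lemma finite_coordinates: "x \<in> Alg \<Longrightarrow> inj f \<Longrightarrow> finite {t. x (f t) \<noteq> 0}"
  unfolding Alg_def supp_def by (auto dest: finite_vimageI)

theorem mainTheorem8:
  fixes \<mu> :: complex and mul :: "vec \<Rightarrow> vec \<Rightarrow> vec"
  assumes "(\<forall>k::int. \<mu> \<noteq> of_int k / 2) \<or> \<mu> \<in> \<int>"
    and "transposed_poisson \<mu> mul"
  shows "\<exists>\<alpha> \<beta> :: int \<Rightarrow> complex.
     finite {t. \<alpha> t \<noteq> 0} \<and> finite {t. \<beta> t \<noteq> 0} \<and>
     (\<forall>m n. mul (e (LB m)) (e (LB n)) =
        (\<lambda>b. case b of MB k \<Rightarrow> \<alpha> (k - m - n) | YB k \<Rightarrow> \<beta> (k - m - n) | _ \<Rightarrow> 0)) \<and>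
     (\<forall>m n. mul (e (LB m)) (e (YB n)) =
        (\<lambda>b. case b of MB k \<Rightarrow> \<beta> (k - m - n - 1) | _ \<Rightarrow> 0)) \<and>
     (\<forall>a b. \<not> (\<exists>m n. a = LB m \<and> b = LB n) \<and>
            \<not> (\<exists>m n. a = LB m \<and> b = YB n) \<and>
            \<not> (\<exists>m n. a = YB n \<and> b = LB m) \<longrightarrow> mul (e a) (e b) = (\<lambda>c. 0))"
proof -
  interpret tp_structure \<mu> mul
    using assms(2) by (rule tp_structure.intro)
  define \<alpha> where "\<alpha> t = bp (LB 0) (LB 0) (MB t)" for t
  define \<beta> where "\<beta> t = bp (LB 0) (LB 0) (YB t)" for t
  have "finite {t. \<alpha> t \<noteq> 0}" and "finite {t. \<beta> t \<noteq> 0}"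
    unfolding \<alpha>_def \<beta>_def by (simp_all add: finite_coordinates bp_in_Alg inj_def)
  moreover have "bp (LB m) (LB n)
      = (\<lambda>b. case b of MB k \<Rightarrow> \<alpha> (k - m - n) | YB k \<Rightarrow> \<beta> (k - m - n) | _ \<Rightarrow> 0)" for m n
    by (rule ext) (simp add: \<alpha>_def \<beta>_def bp_L_L_at_M[of m n] bp_L_L_at_Y[of m n] bp_L_at_L bp_L_at_C split: basis.split)
  moreover have "bp (LB m) (YB n) = (\<lambda>b. case b of MB k \<Rightarrow> \<beta> (k - m - n - 1) | _ \<Rightarrow> 0)" for m n
    by (rule ext) (simp add: \<beta>_def bp_L_Y_at_M[of m n] bp_Y_at_L bp_Y_at_Y bp_Y_at_C split: basis.split)
  moreover have "bp a b = (\<lambda>c. 0)"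
    if "\<not> (\<exists>m n. a = LB m \<and> b = LB n)" "\<not> (\<exists>m n. a = LB m \<and> b = YB n)"
      "\<not> (\<exists>m n. a = YB n \<and> b = LB m)" for a b
    using that by (intro ext) (cases a; cases b; simp add: bp_M_left bp_M_right bp_C_left bp_C_right bp_Y_Y)
  ultimately show ?thesis by blast
qed

end
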